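(* Let $R=k[x_1,x_2,x_3]$ and let $A=R/I$ be an Artinian algebra with $h$-vector $(1,3,h_2,\ldots,h_s)$ and socle degree $s$. If $h_{d-1}-h_d=2(h_d-h_{d+1})>0$ for some $d$ with $r_1(A)<d<s$, then $A$ is not level.
   Context: $k$ is an infinite field of characteristic $0$; $h_i=\dim_kA_i$, $A_s\neq0$. $A$ is level if its socle $\{a\in A:a\mathfrak m=0\}$ ($\mathfrak m$ the maximal homogeneous ideal) is concentrated in a single degree. $r_1(A)=\min\{\ell:(R/(I+(L)))_{\ell+1}=0\}$ for a general linear form $L$ (equivalently $\min\{\ell: x_2^{\ell+1}\in\mathrm{Gin}(I)\}$, generic initial ideal for degree reverse lexicographic order). *)

theory Defs
  imports Complex_Main "HOL-Library.Poly_Mapping" "HOL-Library.Product_Plus"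
begin

text \<open>Monomials in x1,x2,x3 are exponent triples; polynomials of R = k[x1,x2,x3]
  are finitely supported maps from monomials to coefficients.\<close>

type_synonym mono3 = "nat \<times> nat \<times> nat"
type_synonym 'a poly3 = "mono3 \<Rightarrow>\<^sub>0 'a"

definition mdeg :: "mono3 \<Rightarrow> nat" where
  "mdeg m = fst m + fst (snd m) + snd (snd m)"

definition X1 :: "'a::comm_ring_1 poly3" where "X1 = Poly_Mapping.single (1,0,0) 1"
definition X2 :: "'a::comm_ring_1 poly3" where "X2 = Poly_Mapping.single (0,1,0) 1"
definition X3 :: "'a::comm_ring_1 poly3" where "X3 = Poly_Mapping.single (0,0,1) 1"

definition sc :: "'a::comm_ring_1 \<Rightarrow> 'a poly3 \<Rightarrow> 'a poly3" where
  "sc c p = Poly_Mapping.single 0 c * p"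

lemma vs_sc: "vector_space (sc :: 'a::field \<Rightarrow> 'a poly3 \<Rightarrow> 'a poly3)"
proof unfold_locales
  fix a b :: 'a and x y :: "'a poly3"
  show "sc a (x + y) = sc a x + sc a y" by (simp add: sc_def distrib_left)
  show "sc (a + b) x = sc a x + sc b x" by (simp add: sc_def single_add distrib_right)
  show "sc a (sc b x) = sc (a * b) x"
    by (simp add: sc_def mult.assoc[symmetric] mult_single)
  show "sc 1 x = x" by (simp add: sc_def flip: one_poly_mapping.abs_eq)
qed

definition homog :: "nat \<Rightarrow> 'a::comm_ring_1 poly3 set" where
  "homog j = {p. \<forall>m\<in>Poly_Mapping.keys p. mdeg m = j}"

definition hcomp :: "nat \<Rightarrow> 'a::comm_ring_1 poly3 \<Rightarrow> 'a poly3" where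
  "hcomp t p = (\<Sum>m\<in>{m\<in>Poly_Mapping.keys p. mdeg m = t}. Poly_Mapping.single m (Poly_Mapping.lookup p m))"

definition is_ideal :: "'a::comm_ring_1 poly3 set \<Rightarrow> bool" where
  "is_ideal I \<longleftrightarrow> 0 \<in> I \<and> (\<forall>p\<in>I. \<forall>q\<in>I. p + q \<in> I) \<and> (\<forall>r. \<forall>p\<in>I. r * p \<in> I)"

definition homogeneous_ideal :: "'a::comm_ring_1 poly3 set \<Rightarrow> bool" where
  "homogeneous_ideal I \<longleftrightarrow> is_ideal I \<and> (\<forall>p\<in>I. \<forall>t. hcomp t p \<in> I)"

text \<open>h_j = dim_k (R/I)_j = dim_k R_j - dim_k I_j.\<close>
definition hfun :: "'a::field poly3 set \<Rightarrow> nat \<Rightarrow> nat" where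
  "hfun I j = vector_space.dim sc (homog j :: 'a poly3 set) - vector_space.dim sc (homog j \<inter> I)"

text \<open>A = R/I is Artinian: A_j = 0 for all large j.\<close>
definition artinian :: "'a::field poly3 set \<Rightarrow> bool" where
  "artinian I \<longleftrightarrow> (\<exists>N. \<forall>j\<ge>N. homog j \<subseteq> I)"

text \<open>Level: the socle {f + I : f x_i \<in> I for i = 1,2,3} lies in a single degree t.\<close>
definition level :: "'a::field poly3 set \<Rightarrow> bool" where
  "level I \<longleftrightarrow> (\<exists>t. \<forall>f. (X1 * f \<in> I \<and> X2 * f \<in> I \<and> X3 * f \<in> I) \<longrightarrow> f - hcomp t f \<in> I)"

definition linform :: "'a::field \<times> 'a \<times> 'a \<Rightarrow> 'a poly3" where
  "linform c = sc (fst c) X1 + sc (fst (snd c)) X2 + sc (snd (snd c)) X3"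

text \<open>(R/(I+(L)))_j = 0, where I + (L) = {i + L r}.\<close>
definition quot_vanishes :: "'a::field poly3 set \<Rightarrow> 'a poly3 \<Rightarrow> nat \<Rightarrow> bool" where
  "quot_vanishes I L j \<longleftrightarrow> homog j \<subseteq> {i + L * r | i r. i \<in> I}"

definition rL :: "'a::field poly3 set \<Rightarrow> 'a \<times> 'a \<times> 'a \<Rightarrow> nat" where
  "rL I c = (LEAST l. quot_vanishes I (linform c) (Suc l))"

definition peval :: "'a::field poly3 \<Rightarrow> 'a \<times> 'a \<times> 'a \<Rightarrow> 'a" where
  "peval F c = (\<Sum>m\<in>Poly_Mapping.keys F. Poly_Mapping.lookup F m * fst c ^ fst m * fst (snd c) ^ fst (snd m)
                                * snd (snd c) ^ snd (snd m))"

text \<open>A property holds for a general point of k^3 if it holds on a nonempty Zariski open set.\<close>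
definition general :: "('a::field \<times> 'a \<times> 'a \<Rightarrow> bool) \<Rightarrow> bool" where
  "general P \<longleftrightarrow> (\<exists>F. F \<noteq> 0 \<and> (\<forall>c. peval F c \<noteq> 0 \<longrightarrow> P c))"

definition r1 :: "'a::field poly3 set \<Rightarrow> nat" where
  "r1 I = (THE r. general (\<lambda>c. rL I c = r))"

end

(* Let L be a general linear form, so that multiplication by L maps A_j onto A_(j+1)
  for every j >= r_1(A), and write k_j = dim (0 :_A L)_j.  Comparing A_(d-1) -> A_d with the
  surjection A_d -> A_(d+1) gives h_(d-1) - h_d <= k_(d-1) and h_d - h_(d+1) = k_d, so the
  hypothesis says 2 k_d <= k_(d-1).  Complete L to a basis L, y, z of R_1.  If A is level, its
  socle lives in degree s only; hence z is injective on (0 :_A (L, y))_(d-1), and y maps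
  (0 :_A L)_(d-1) into (0 :_A L)_d with that kernel.  Counting dimensions, y (and likewise z)
  kills (0 :_A L)_d, which therefore lies in the socle in degree d < s and vanishes, contradicting
  k_d = h_d - h_(d+1) > 0.

  That r_1(A) is attained at all rests on the vanishing of (R/(I + (L)))_j being a Zariski-open
  condition on the coefficients of L (a determinant), and on k being infinite. *)

theory Submission
  imports Defs "HOL-Library.Product_Lexorder" "Jordan_Normal_Form.Determinant"
begin

section \<open>Homogeneous components\<close>

text \<open>With the lexicographic order, monomials form an ordered cancellative monoid, which makes
  \<open>'a poly3\<close> an integral domain.\<close>

instance prod :: (ordered_cancel_comm_monoid_add, ordered_cancel_comm_monoid_add) ordered_cancel_comm_monoid_add
proof
  fix a b c :: "'a \<times> 'b"
  assume "a \<le> b" then show "c + a \<le> c + b"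
    by (cases a; cases b; cases c)
      (auto simp: less_eq_prod_def less_le add_left_cancel intro: add_strict_left_mono add_left_mono)
qed

lemma mdeg_add [simp]: "mdeg (a + b) = mdeg a + mdeg b"
  by (cases a; cases b) (auto simp: mdeg_def)

lemma lookup_hcomp:
  "Poly_Mapping.lookup (hcomp t p) m = (if mdeg m = t then Poly_Mapping.lookup p m else 0)"
proof -
  have "Poly_Mapping.lookup (hcomp t p) m =
     (\<Sum>x\<in>{m\<in>Poly_Mapping.keys p. mdeg m = t}. (Poly_Mapping.lookup p x when x = m))"
    unfolding hcomp_def lookup_sum lookup_single by simp
  also have "\<dots> = (if mdeg m = t then Poly_Mapping.lookup p m else 0)"
    by (simp add: when_def sum.delta in_keys_iff)
  finally show ?thesis .
qed

lemma hcomp_add: "hcomp t (p + q) = hcomp t p + hcomp t q"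
  by (rule poly_mapping_eqI) (simp add: lookup_hcomp lookup_add)

lemma hcomp_sum: "hcomp t (sum f S) = (\<Sum>x\<in>S. hcomp t (f x))"
  by (rule poly_mapping_eqI) (simp add: lookup_hcomp lookup_sum)

lemma lookup_sc: "Poly_Mapping.lookup (sc a p) m = a * Poly_Mapping.lookup p m"
  by (simp add: sc_def flip: mult_map_scale_conv_mult) (simp add: Poly_Mapping.map.rep_eq when_def)

lemma homog_iff: "p \<in> homog j \<longleftrightarrow> (\<forall>m. Poly_Mapping.lookup p m \<noteq> 0 \<longrightarrow> mdeg m = j)"
  by (auto simp: homog_def in_keys_iff)

lemma hcomp_in_homog: "hcomp t p \<in> homog t"
  by (auto simp: homog_iff lookup_hcomp split: if_splits)

lemma hcomp_homog_self: "p \<in> homog t \<Longrightarrow> hcomp t p = p"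
  by (rule poly_mapping_eqI) (auto simp: lookup_hcomp homog_iff)

lemma hcomp_homog_other: "p \<in> homog t' \<Longrightarrow> t \<noteq> t' \<Longrightarrow> hcomp t p = 0"
  by (rule poly_mapping_eqI) (auto simp: lookup_hcomp homog_iff)

lemma sum_hcomp: "(\<Sum>t\<in>mdeg ` Poly_Mapping.keys p. hcomp t p) = p"
proof (rule poly_mapping_eqI)
  fix m
  have "Poly_Mapping.lookup (\<Sum>t\<in>mdeg ` Poly_Mapping.keys p. hcomp t p) m
     = (\<Sum>t\<in>mdeg ` Poly_Mapping.keys p. if mdeg m = t then Poly_Mapping.lookup p m else 0)"
    by (simp add: lookup_sum lookup_hcomp)
  also have "\<dots> = Poly_Mapping.lookup p m"
    by (auto simp: sum.delta eq_commute[of "mdeg m"] in_keys_iff)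
  finally show "Poly_Mapping.lookup (\<Sum>t\<in>mdeg ` Poly_Mapping.keys p. hcomp t p) m = Poly_Mapping.lookup p m" .
qed

lemma homog_mult:
  assumes "p \<in> homog i" "q \<in> homog j"
  shows "p * q \<in> homog (i + j)"
  unfolding homog_def
proof (intro CollectI ballI)
  fix m assume "m \<in> Poly_Mapping.keys (p * q)"
  then obtain a b where "m = a + b" "a \<in> Poly_Mapping.keys p" "b \<in> Poly_Mapping.keys q"
    using keys_mult[of p q] by blast
  then show "mdeg m = i + j" using assms by (simp add: homog_def)
qed

lemma homog_add: "p \<in> homog i \<Longrightarrow> q \<in> homog i \<Longrightarrow> p + q \<in> homog i"
  unfolding homog_iff lookup_add by (metis add.left_neutral add.right_neutral)

lemma homog_zero [simp]: "0 \<in> homog i"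
  by (auto simp: homog_iff)

lemma homog_sc: "p \<in> homog i \<Longrightarrow> sc a p \<in> homog i"
  unfolding homog_iff lookup_sc by (metis mult_zero_right)

lemma hcomp_mult_homog:
  assumes q: "q \<in> homog i"
  shows "hcomp (i + t) (q * p) = q * hcomp t p"
proof -
  let ?D = "mdeg ` Poly_Mapping.keys p"
  have "hcomp (i + t) (q * p) = (\<Sum>t'\<in>?D. hcomp (i + t) (q * hcomp t' p))"
    by (subst sum_hcomp[of p, symmetric]) (simp add: sum_distrib_left hcomp_sum)
  also have "\<dots> = (\<Sum>t'\<in>?D. if t' = t then q * hcomp t p else 0)"
  proof (rule sum.cong)
    fix t'
    have h: "q * hcomp t' p \<in> homog (i + t')" by (rule homog_mult[OF q hcomp_in_homog])
    show "hcomp (i + t) (q * hcomp t' p) = (if t' = t then q * hcomp t p else 0)"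
      using hcomp_homog_self[OF h] hcomp_homog_other[OF h] by auto
  qed simp
  also have "\<dots> = q * hcomp t p"
  proof -
    have "t \<notin> ?D \<Longrightarrow> hcomp t p = 0"
      by (rule poly_mapping_eqI) (auto simp: lookup_hcomp in_keys_iff)
    then show ?thesis by (auto simp: sum.delta')
  qed
  finally show ?thesis .
qed

lemma X_in_homog: "X1 \<in> homog 1" "X2 \<in> homog 1" "X3 \<in> homog 1"
  by (auto simp: homog_def X1_def X2_def X3_def mdeg_def)

lemma linform_in_homog: "linform c \<in> homog 1"
  unfolding linform_def by (intro homog_add homog_sc X_in_homog)

section \<open>Dimension counting inside a finitely spanned subspace\<close>

context vector_space
begin

lemma span_Int_eq_zero_if_independent_Un:
  assumes "independent (A \<union> C)" "A \<inter> C = {}" "v \<in> span A" "v \<in> span C"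
  shows "v = 0"
proof -
  have iA: "independent A" and iC: "independent C"
    using assms(1) by (auto intro: dependent_mono)
  have "representation (A \<union> C) v = representation A v"
    by (rule representation_extend[OF assms(1) assms(3)]) auto
  moreover have "representation (A \<union> C) v = representation C v"
    by (rule representation_extend[OF assms(1) assms(4)]) auto
  ultimately have "representation A v b = 0" for b
    using representation_ne_zero[of A v b] representation_ne_zero[of C v b] assms(2) by auto
  then show ?thesis using sum_nonzero_representation_eq[OF iA assms(3)] by simp
qed

lemma independent_Un_if_span_Int_eq_zero:
  assumes iA: "independent A" and iC: "independent C"
    and disj: "\<And>v. v \<in> span A \<Longrightarrow> v \<in> span C \<Longrightarrow> v = 0"
  shows "independent (A \<union> C)" "A \<inter> C = {}"
proof -
  show AC: "A \<inter> C = {}"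
  proof safe
    fix a assume "a \<in> A" "a \<in> C"
    then have "a = 0" using disj span_base by blast
    then show "a \<in> {}" using \<open>a \<in> A\<close> iA dependent_zero by blast
  qed
  have not_in_span: "a \<notin> span (A' \<union> C' - {a})"
    if "a \<in> A'" "independent A'" "A' \<inter> C' = {}" "\<And>v. v \<in> span A' \<Longrightarrow> v \<in> span C' \<Longrightarrow> v = 0"
    for a A' C'
  proof
    assume "a \<in> span (A' \<union> C' - {a})"
    moreover have "A' \<union> C' - {a} = (A' - {a}) \<union> C'" using that(1,3) by auto
    ultimately obtain x y where xy: "a = x + y" "x \<in> span (A' - {a})" "y \<in> span C'"
      using span_Un by auto
    have "a - x \<in> span A'"
      using that(1) xy(2) span_mono[of "A' - {a}" A'] by (auto intro: span_diff span_base)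
    then have "y = 0" using that(4) xy by (simp add: algebra_simps)
    then have "a \<in> span (A' - {a})" using xy by simp
    then show False using that(1,2) dependent_def by blast
  qed
  have "a \<notin> span (A \<union> C - {a})" if a: "a \<in> A \<union> C" for a
  proof (cases "a \<in> A")
    case True
    then show ?thesis using not_in_span iA AC disj by blast
  next
    case False
    then have "a \<notin> span (C \<union> A - {a})"
      using a not_in_span[of a C A] iC AC disj by blast
    then show ?thesis by (simp add: Un_commute)
  qed
  then show "independent (A \<union> C)" unfolding dependent_def by blast
qed

lemma finite_basis_in_span:
  assumes "finite F" "V \<subseteq> span F"
  obtains B where "finite B" "B \<subseteq> V" "independent B" "V \<subseteq> span B" "card B = dim V"
proof -
  obtain B where B: "B \<subseteq> V" "independent B" "V \<subseteq> span B"
    using maximal_independent_subset[of V] by blast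
  have "finite B" using independent_span_bound[OF assms(1) B(2)] B(1) assms(2) by auto
  moreover have "card B = dim V" using basis_card_eq_dim[OF B(1) B(3) B(2)] .
  ultimately show ?thesis using that B by blast
qed

lemma independent_card_le_dim_in_span:
  assumes "finite F" "V \<subseteq> span F" "independent B" "B \<subseteq> V"
  shows "finite B" "card B \<le> dim V"
proof -
  obtain D where D: "finite D" "D \<subseteq> V" "independent D" "V \<subseteq> span D" "card D = dim V"
    using finite_basis_in_span[OF assms(1,2)] by blast
  from independent_span_bound[OF D(1) assms(3)] assms(4) D(4) D(5)
  show "finite B" "card B \<le> dim V" by auto
qed

lemma dim_subset_in_span:
  assumes "finite F" "T \<subseteq> span F" "S \<subseteq> T"
  shows "dim S \<le> dim T"
proof -
  obtain B where B: "finite B" "B \<subseteq> S" "independent B" "S \<subseteq> span B" "card B = dim S"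
    using finite_basis_in_span[of F S] assms by blast
  show ?thesis using independent_card_le_dim_in_span(2)[OF assms(1,2) B(3)] B assms(3) by auto
qed

lemma subspace_eq_if_dim_le:
  assumes "finite F" "T \<subseteq> span F" "S \<subseteq> T" "subspace S" "dim T \<le> dim S"
  shows "S = T"
proof -
  obtain B where B: "finite B" "B \<subseteq> S" "independent B" "S \<subseteq> span B" "card B = dim S"
    using finite_basis_in_span[of F S] assms by blast
  have "t \<in> span B" if t: "t \<in> T" for t
  proof (rule ccontr)
    assume nt: "t \<notin> span B"
    have "independent (insert t B)" using independent_insertI[OF nt B(3)] .
    moreover have "insert t B \<subseteq> T" using t B(2) assms(3) by auto
    ultimately have "card (insert t B) \<le> dim T" by (rule independent_card_le_dim_in_span(2)[OF assms(1,2)])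
    moreover have "t \<notin> B" using nt span_base by blast
    ultimately show False using B(1,5) assms(5) by simp
  qed
  moreover have "span B \<subseteq> S" using span_minimal[OF B(2) assms(4)] .
  ultimately show ?thesis using assms(3) by auto
qed

lemma subset_sums_left:
  assumes "subspace T"
  shows "S \<subseteq> {x + y |x y. x \<in> S \<and> y \<in> T}"
proof
  fix v assume "v \<in> S"
  moreover have "v = v + 0" "0 \<in> T" using subspace_0[OF assms] by simp_all
  ultimately show "v \<in> {x + y |x y. x \<in> S \<and> y \<in> T}" by blast
qed

lemma subset_sums_right:
  assumes "subspace S"
  shows "T \<subseteq> {x + y |x y. x \<in> S \<and> y \<in> T}"
proof
  fix v assume "v \<in> T"
  moreover have "v = 0 + v" "0 \<in> S" using subspace_0[OF assms] by simp_all
  ultimately show "v \<in> {x + y |x y. x \<in> S \<and> y \<in> T}" by blast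
qed

lemma dim_sums_Int_in_span:
  assumes F: "finite F" "S \<subseteq> span F" "T \<subseteq> span F" and sS: "subspace S" and sT: "subspace T"
  shows "dim {x + y |x y. x \<in> S \<and> y \<in> T} + dim (S \<inter> T) = dim S + dim T"
    (is "dim ?ST + _ = _")
proof -
  have "S \<inter> T \<subseteq> span F" using F(2) by blast
  then obtain B0 where B0: "B0 \<subseteq> S \<inter> T" "independent B0" "S \<inter> T \<subseteq> span B0" "card B0 = dim (S \<inter> T)"
    using finite_basis_in_span[OF F(1)] by metis
  have "B0 \<subseteq> S" using B0(1) by blast
  then obtain B where B: "B0 \<subseteq> B" "B \<subseteq> S" "independent B" "S \<subseteq> span B"
    using maximal_independent_subset_extend[OF _ B0(2)] by metis
  have finB: "finite B" "card B = dim S"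
    using independent_card_le_dim_in_span(1)[OF F(1,2) B(3,2)] basis_card_eq_dim[OF B(2,4,3)] by simp_all
  obtain C where C: "finite C" "C \<subseteq> T" "independent C" "T \<subseteq> span C" "card C = dim T"
    using finite_basis_in_span[OF F(1,3)] by metis
  define B1 where "B1 = B - B0"
  have B01: "B = B0 \<union> B1" "B0 \<inter> B1 = {}" using B(1) unfolding B1_def by auto
  have iB1: "independent B1" using B(3) unfolding B1_def by (auto intro: dependent_mono)
  have spanB0: "span B0 \<subseteq> S \<inter> T" by (rule span_minimal[OF B0(1) subspace_inter[OF sS sT]])
  have spanB1: "span B1 \<subseteq> S" using span_minimal[of B1 S] B(2) sS unfolding B1_def by auto
  have spanC: "span C \<subseteq> T" using span_minimal[OF C(2) sT] .
  have "v = 0" if "v \<in> span B1" "v \<in> span C" for v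
  proof -
    have "v \<in> span B0" using that spanB1 spanC B0(3) by auto
    then show ?thesis using span_Int_eq_zero_if_independent_Un[of B0 B1 v] B(3) B01 that(1) by auto
  qed
  then have indep: "independent (B1 \<union> C)" "B1 \<inter> C = {}"
    using independent_Un_if_span_Int_eq_zero[OF iB1 C(3)] by auto
  have "B1 \<union> C \<subseteq> ?ST"
    using subset_sums_left[OF sT, of S] subset_sums_right[OF sS, of T] B(2) C(2) unfolding B1_def by blast
  moreover have "?ST \<subseteq> span (B1 \<union> C)"
  proof clarify
    fix x y assume xy: "x \<in> S" "y \<in> T"
    then have "x \<in> span (B0 \<union> B1)" using B(4) B01(1) by auto
    then obtain x0 x1 where x: "x = x0 + x1" "x0 \<in> span B0" "x1 \<in> span B1"
      unfolding span_Un by auto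
    have "x0 \<in> T" using x(2) spanB0 by auto
    then have "x0 + y \<in> T" using subspace_add[OF sT] xy(2) by blast
    then have "x0 + y \<in> span C" using C(4) by auto
    moreover have "x + y = x1 + (x0 + y)" using x(1) by (simp add: algebra_simps)
    ultimately show "x + y \<in> span (B1 \<union> C)" unfolding span_Un using x(3) by blast
  qed
  ultimately have "card (B1 \<union> C) = dim ?ST" by (rule basis_card_eq_dim[OF _ _ indep(1)])
  moreover have "card (B1 \<union> C) = card B - card B0 + card C"
  proof -
    have "finite B0" "finite B1" using finB(1) B(1) unfolding B1_def by (auto intro: finite_subset)
    then show ?thesis
      using card_Un_disjoint[OF _ C(1) indep(2)] card_Diff_subset[OF _ B(1)] unfolding B1_def by simp
  qed
  moreover have "card B0 \<le> card B" using card_mono[OF finB(1) B(1)] .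
  ultimately show ?thesis using finB(2) C(5) B0(4) by linarith
qed

lemma dim_add_dim_Int_le:
  assumes F: "finite F" "W \<subseteq> span F" and UW: "U \<subseteq> W"
    and sU: "subspace U" and sW: "subspace W" and sJ: "subspace J"
  shows "dim U + dim (W \<inter> J) \<le> dim W + dim (U \<inter> J)"
proof -
  have "{x + y |x y. x \<in> U \<and> y \<in> W \<inter> J} \<subseteq> W" using UW subspace_add[OF sW] by auto
  then have "dim {x + y |x y. x \<in> U \<and> y \<in> W \<inter> J} \<le> dim W" by (rule dim_subset_in_span[OF F])
  moreover have "U \<inter> (W \<inter> J) = U \<inter> J" using UW by auto
  then have "dim {x + y |x y. x \<in> U \<and> y \<in> W \<inter> J} + dim (U \<inter> J) = dim U + dim (W \<inter> J)"
    using dim_sums_Int_in_span[OF F(1) _ _ sU subspace_inter[OF sW sJ]] F(2) UW by auto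
  ultimately show ?thesis by linarith
qed

lemma dim_add_dim_Int_eq:
  assumes F: "finite F" "W \<subseteq> span F" and UW: "U \<subseteq> W"
    and sU: "subspace U" and sW: "subspace W" and sJ: "subspace J"
    and W_sums: "W \<subseteq> {u + j |u j. u \<in> U \<and> j \<in> J}"
  shows "dim U + dim (W \<inter> J) = dim W + dim (U \<inter> J)"
proof -
  have "{x + y |x y. x \<in> U \<and> y \<in> W \<inter> J} = W"
  proof
    show "W \<subseteq> {x + y |x y. x \<in> U \<and> y \<in> W \<inter> J}"
    proof
      fix w assume w: "w \<in> W"
      then obtain u j where uj: "w = u + j" "u \<in> U" "j \<in> J" using W_sums by auto
      have "w - u \<in> W" using w uj(2) UW subspace_diff[OF sW] by blast
      then have "j \<in> W" using uj(1) by simp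
      then show "w \<in> {x + y |x y. x \<in> U \<and> y \<in> W \<inter> J}" using uj by blast
    qed
  qed (use UW subspace_add[OF sW] in auto)
  moreover have "U \<inter> (W \<inter> J) = U \<inter> J" using UW by auto
  then have "dim {x + y |x y. x \<in> U \<and> y \<in> W \<inter> J} + dim (U \<inter> J) = dim U + dim (W \<inter> J)"
    using dim_sums_Int_in_span[OF F(1) _ _ sU subspace_inter[OF sW sJ]] F(2) UW by auto
  ultimately show ?thesis by simp
qed

end

section \<open>Polynomials as a vector space\<close>

interpretation vs: vector_space "sc :: 'a::field \<Rightarrow> 'a poly3 \<Rightarrow> 'a poly3"
  by (rule vs_sc)

lemma sc_single: "sc a (Poly_Mapping.single m 1) = Poly_Mapping.single m a"
  by (simp add: sc_def mult_single)

lemma sum_single_lookup: "(\<Sum>m\<in>Poly_Mapping.keys p. Poly_Mapping.single m (Poly_Mapping.lookup p m)) = p"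
  by (rule poly_mapping_eqI) (simp add: lookup_sum lookup_single when_def sum.delta in_keys_iff)

definition monomials :: "nat \<Rightarrow> 'a::field poly3 set" where
  "monomials j = (\<lambda>m. Poly_Mapping.single m 1) ` {m. mdeg m = j}"

lemma finite_mdeg_eq: "finite {m. mdeg m = j}"
proof (rule finite_subset)
  show "{m. mdeg m = j} \<subseteq> {0..j} \<times> {0..j} \<times> {0..j}" by (auto simp: mdeg_def)
qed auto

lemma finite_monomials: "finite (monomials j)"
  unfolding monomials_def using finite_mdeg_eq by simp

lemma single_in_homog: "mdeg m = j \<Longrightarrow> Poly_Mapping.single m a \<in> homog j"
  by (auto simp: homog_def)

lemma homog_subset_span_monomials: "homog j \<subseteq> vs.span (monomials j)"
proof
  fix p :: "'a poly3" assume p: "p \<in> homog j"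
  have "p = (\<Sum>m\<in>Poly_Mapping.keys p. sc (Poly_Mapping.lookup p m) (Poly_Mapping.single m 1))"
    by (simp add: sc_single sum_single_lookup)
  also have "\<dots> \<in> vs.span (monomials j)"
    using p by (intro vs.span_sum vs.span_scale vs.span_base) (auto simp: monomials_def homog_def)
  finally show "p \<in> vs.span (monomials j)" .
qed

lemma subspace_homog: "vs.subspace (homog j)"
  by (auto simp: vs.subspace_def intro: homog_add homog_sc)

lemma module_hom_mult: "module_hom (sc :: 'a::field \<Rightarrow> 'a poly3 \<Rightarrow> 'a poly3) sc (\<lambda>p. q * p)"
proof -
  have m: "Modules.module (sc :: 'a::field \<Rightarrow> 'a poly3 \<Rightarrow> 'a poly3)"
    using vs_sc by (simp add: module_iff_vector_space)
  show ?thesis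
    by (rule module_hom.intro[OF m m]) (unfold_locales, auto simp: sc_def distrib_left mult.left_commute)
qed

lemma subspace_mult_image: "vs.subspace S \<Longrightarrow> vs.subspace ((\<lambda>p. (q::'a::field poly3) * p) ` S)"
  using module_hom.subspace_image[OF module_hom_mult] .

lemma dim_mult_image:
  fixes q :: "'a::field poly3"
  assumes "q \<noteq> 0"
  shows "vs.dim ((\<lambda>p. q * p) ` X) = vs.dim X"
proof -
  interpret h: module_hom "sc :: 'a \<Rightarrow> 'a poly3 \<Rightarrow> 'a poly3" sc "\<lambda>p. q * p" by (rule module_hom_mult)
  let ?g = "\<lambda>p. q * p"
  have inj: "inj ?g" using assms by (auto intro: injI)
  obtain B where B: "B \<subseteq> X" "vs.independent B" "X \<subseteq> vs.span B"
    using vs.maximal_independent_subset[of X] by blast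
  have "vs.independent (?g ` B)"
    using h.independent_injective_image[OF B(2)] inj_on_subset[OF inj] by blast
  moreover have "?g ` X \<subseteq> vs.span (?g ` B)" using h.span_image[of B] B(3) by auto
  ultimately have "card (?g ` B) = vs.dim (?g ` X)"
    using B(1) by (intro vs.basis_card_eq_dim) auto
  moreover have "card (?g ` B) = card B" using card_image[OF inj_on_subset[OF inj]] by blast
  ultimately show ?thesis using vs.basis_card_eq_dim[OF B(1,3,2)] by simp
qed

lemma ideal_zero: "is_ideal I \<Longrightarrow> 0 \<in> I"
  by (simp add: is_ideal_def)

lemma ideal_add: "is_ideal I \<Longrightarrow> p \<in> I \<Longrightarrow> q \<in> I \<Longrightarrow> p + q \<in> I"
  by (simp add: is_ideal_def)

lemma ideal_mult: "is_ideal I \<Longrightarrow> p \<in> I \<Longrightarrow> r * p \<in> I"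
  by (simp add: is_ideal_def)

lemma ideal_sc: "is_ideal I \<Longrightarrow> p \<in> I \<Longrightarrow> sc c p \<in> I"
  by (simp add: is_ideal_def sc_def)

lemma ideal_diff: "is_ideal I \<Longrightarrow> p \<in> I \<Longrightarrow> q \<in> I \<Longrightarrow> p - q \<in> I"
  using ideal_add[of I p "(-1) * q"] ideal_mult[of I q "-1"] by simp

lemma ideal_sum: "is_ideal I \<Longrightarrow> (\<And>x. x \<in> S \<Longrightarrow> f x \<in> I) \<Longrightarrow> sum f S \<in> I"
  by (induction S rule: infinite_finite_induct) (auto intro: ideal_add ideal_zero)

lemma subspace_ideal: "is_ideal I \<Longrightarrow> vs.subspace I"
  by (auto simp: vs.subspace_def intro: ideal_add ideal_zero ideal_sc)

lemma subspace_mult_preimage: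
  assumes "is_ideal I" "vs.subspace V"
  shows "vs.subspace {a \<in> V. q * a \<in> I}"
proof (rule vs.subspaceI)
  show "0 \<in> {a \<in> V. q * a \<in> I}" using assms vs.subspace_0 ideal_zero by auto
  fix x y assume "x \<in> {a \<in> V. q * a \<in> I}" "y \<in> {a \<in> V. q * a \<in> I}"
  then show "x + y \<in> {a \<in> V. q * a \<in> I}"
    using assms vs.subspace_add[of V x y] ideal_add[of I] by (auto simp: distrib_left)
next
  fix c x assume "x \<in> {a \<in> V. q * a \<in> I}"
  moreover have "q * sc c x = sc c (q * x)" by (simp add: sc_def mult.left_commute)
  ultimately show "sc c x \<in> {a \<in> V. q * a \<in> I}"
    using assms vs.subspace_scale[of V x c] ideal_sc[of I] by auto
qed

lemma homog_subset_ideal_iff: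
  assumes "is_ideal J"
  shows "homog N \<subseteq> J \<longleftrightarrow> (\<forall>m. mdeg m = N \<longrightarrow> Poly_Mapping.single m 1 \<in> J)"
proof (intro iffI allI impI subsetI)
  fix p :: "'a poly3"
  assume mon: "\<forall>m. mdeg m = N \<longrightarrow> Poly_Mapping.single m 1 \<in> J" and p: "p \<in> homog N"
  have "(\<Sum>m\<in>Poly_Mapping.keys p. sc (Poly_Mapping.lookup p m) (Poly_Mapping.single m 1)) \<in> J"
    using p mon by (intro ideal_sum[OF assms] ideal_sc[OF assms]) (auto simp: homog_def)
  then show "p \<in> J" by (simp add: sc_single sum_single_lookup)
qed (use single_in_homog in blast)

lemma hfun_eq_dim_diff:
  "int (hfun I j) = int (vs.dim (homog j :: 'a poly3 set)) - int (vs.dim (homog j \<inter> (I :: 'a::field poly3 set)))"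
proof -
  have "vs.dim (homog j \<inter> I) \<le> vs.dim (homog j :: 'a poly3 set)"
    by (rule vs.dim_subset_in_span[OF finite_monomials homog_subset_span_monomials]) auto
  then show ?thesis by (simp add: hfun_def of_nat_diff)
qed

lemma homog_subset_if_hfun_eq_0:
  assumes "is_ideal I" "hfun I j = 0"
  shows "homog j \<subseteq> (I :: 'a::field poly3 set)"
proof -
  have "vs.dim (homog j :: 'a poly3 set) \<le> vs.dim (homog j \<inter> I)"
    using assms(2) hfun_eq_dim_diff[of I j] by simp
  then have "homog j \<inter> I = homog j"
    by (intro vs.subspace_eq_if_dim_le[OF finite_monomials homog_subset_span_monomials])
      (auto intro: vs.subspace_inter subspace_homog subspace_ideal[OF assms(1)])
  then show ?thesis by auto
qed

lemma not_homog_subset_if_hfun_neq_0: "hfun I j \<noteq> 0 \<Longrightarrow> \<not> homog j \<subseteq> (I :: 'a::field poly3 set)"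
  by (auto simp: hfun_def Int_absorb2)

section \<open>Linear forms and the socle of a level algebra\<close>

lemma lookup_X:
  "Poly_Mapping.lookup X1 m = (if m = (1,0,0) then 1 else 0)"
  "Poly_Mapping.lookup X2 m = (if m = (0,1,0) then 1 else 0)"
  "Poly_Mapping.lookup X3 m = (if m = (0,0,1) then 1 else 0)"
  by (auto simp: X1_def X2_def X3_def lookup_single when_def)

lemma X_neq_zero: "(X1 :: 'a::field poly3) \<noteq> 0" "(X2 :: 'a::field poly3) \<noteq> 0" "(X3 :: 'a::field poly3) \<noteq> 0"
  using lookup_X(1)[of "(1,0,0)"] lookup_X(2)[of "(0,1,0)"] lookup_X(3)[of "(0,0,1)"]
  by (metis lookup_zero one_neq_zero)+

lemma linform_mult:
  "linform c * a = sc (fst c) (X1 * a) + sc (fst (snd c)) (X2 * a) + sc (snd (snd c)) (X3 * a)"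
  by (simp add: linform_def distrib_right sc_def mult.assoc)

lemma linform_zero: "linform (0 :: 'a::field \<times> 'a \<times> 'a) = 0"
  by (simp add: linform_def sc_def zero_prod_def)

lemma linform_neq_zero:
  assumes "c \<noteq> 0"
  shows "linform c \<noteq> (0 :: 'a::field poly3)"
proof
  assume "linform c = (0 :: 'a poly3)"
  then have "Poly_Mapping.lookup (linform c) m = 0" for m by simp
  from this[of "(1,0,0)"] this[of "(0,1,0)"] this[of "(0,0,1)"]
  have "fst c = 0" "fst (snd c) = 0" "snd (snd c) = 0"
    by (simp_all add: linform_def lookup_add lookup_sc lookup_X)
  then show False using assms by (cases c) (auto simp: zero_prod_def)
qed

lemma ideal_cancel_combination:
  assumes I: "is_ideal I" and "sc \<alpha> P + sc \<beta> Q + sc \<gamma> R \<in> I" "Q \<in> I" "R \<in> I" "\<alpha> \<noteq> (0::'a::field)"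
  shows "P \<in> I"
proof -
  have "sc \<alpha> P = (sc \<alpha> P + sc \<beta> Q + sc \<gamma> R) - sc \<beta> Q - sc \<gamma> R" by simp
  then have "sc \<alpha> P \<in> I" using assms by (metis ideal_diff ideal_sc)
  then have "sc (1 / \<alpha>) (sc \<alpha> P) \<in> I" using ideal_sc[OF I] by blast
  then show ?thesis using assms(5) by simp
qed

lemma complementary_linear_forms:
  fixes I :: "'a::field poly3 set"
  assumes I: "is_ideal I" and c: "c \<noteq> 0"
  obtains y z where "y \<in> homog 1" "y \<noteq> 0" "z \<in> homog 1" "z \<noteq> 0"
    "\<And>a. linform c * a \<in> I \<Longrightarrow> y * a \<in> I \<Longrightarrow> z * a \<in> I \<Longrightarrow> X1 * a \<in> I \<and> X2 * a \<in> I \<and> X3 * a \<in> I"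
proof -
  obtain c1 c2 c3 where cc: "c = (c1, c2, c3)" by (cases c)
  have L: "linform c * a = sc c1 (X1 * a) + sc c2 (X2 * a) + sc c3 (X3 * a)" for a
    using linform_mult[of c a] cc by simp
  consider "c1 \<noteq> 0" | "c2 \<noteq> 0" | "c3 \<noteq> 0" using c cc by (auto simp: zero_prod_def)
  then show ?thesis
  proof cases
    case 1
    then show ?thesis
      using that[OF X_in_homog(2) X_neq_zero(2) X_in_homog(3) X_neq_zero(3)]
        ideal_cancel_combination[OF I, of c1 _ c2 _ c3] by (auto simp: L)
  next
    case 2
    have "X2 * a \<in> I" if "linform c * a \<in> I" "X1 * a \<in> I" "X3 * a \<in> I" for a
    proof -
      have "sc c2 (X2 * a) + sc c1 (X1 * a) + sc c3 (X3 * a) \<in> I"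
        using that(1) by (simp add: L add.commute add.left_commute)
      then show ?thesis using ideal_cancel_combination[OF I _ that(2,3) 2] by blast
    qed
    then show ?thesis using that[OF X_in_homog(1) X_neq_zero(1) X_in_homog(3) X_neq_zero(3)] by blast
  next
    case 3
    have "X3 * a \<in> I" if "linform c * a \<in> I" "X1 * a \<in> I" "X2 * a \<in> I" for a
    proof -
      have "sc c3 (X3 * a) + sc c1 (X1 * a) + sc c2 (X2 * a) \<in> I"
        using that(1) by (simp add: L add.commute add.left_commute)
      then show ?thesis using ideal_cancel_combination[OF I _ that(2,3) 3] by blast
    qed
    then show ?thesis using that[OF X_in_homog(1) X_neq_zero(1) X_in_homog(2) X_neq_zero(2)] by blast
  qed
qed

lemma level_socle_in_ideal:
  fixes I :: "'a::field poly3 set"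
  assumes I: "is_ideal I" and lev: "level I" and hs: "hfun I s \<noteq> 0" and hs1: "hfun I (Suc s) = 0"
    and a: "a \<in> homog j" "j \<noteq> s" "X1 * a \<in> I" "X2 * a \<in> I" "X3 * a \<in> I"
  shows "a \<in> I"
proof -
  obtain t where t: "\<And>f. X1 * f \<in> I \<Longrightarrow> X2 * f \<in> I \<Longrightarrow> X3 * f \<in> I \<Longrightarrow> f - hcomp t f \<in> I"
    using lev unfolding level_def by blast
  obtain f where f: "f \<in> homog s" "f \<notin> I" using not_homog_subset_if_hfun_neq_0[OF hs] by auto
  have "homog (Suc s) \<subseteq> I" by (rule homog_subset_if_hfun_eq_0[OF I hs1])
  then have "X1 * f \<in> I" "X2 * f \<in> I" "X3 * f \<in> I"
    using homog_mult[OF X_in_homog(1) f(1)] homog_mult[OF X_in_homog(2) f(1)]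
      homog_mult[OF X_in_homog(3) f(1)] by auto
  then have "f - hcomp t f \<in> I" by (rule t)
  then have "t = s" using hcomp_homog_other[OF f(1)] f(2) by fastforce
  then show ?thesis using t[OF a(3-5)] hcomp_homog_other[OF a(1)] a(2) by simp
qed

lemma level_socle_linear_forms:
  fixes I :: "'a::field poly3 set"
  assumes I: "is_ideal I" and "level I" "hfun I s \<noteq> 0" "hfun I (Suc s) = 0" and c: "c \<noteq> 0"
  obtains y z where "y \<in> homog 1" "y \<noteq> 0" "z \<in> homog 1" "z \<noteq> 0"
    "\<And>a j. a \<in> homog j \<Longrightarrow> j \<noteq> s \<Longrightarrow> linform c * a \<in> I \<Longrightarrow> y * a \<in> I \<Longrightarrow> z * a \<in> I \<Longrightarrow> a \<in> I"
proof -
  obtain y z where yz: "y \<in> homog 1" "y \<noteq> 0" "z \<in> homog 1" "z \<noteq> 0"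
    and X: "\<And>a. linform c * a \<in> I \<Longrightarrow> y * a \<in> I \<Longrightarrow> z * a \<in> I \<Longrightarrow> X1 * a \<in> I \<and> X2 * a \<in> I \<and> X3 * a \<in> I"
    using complementary_linear_forms[OF I c] by blast
  show ?thesis
    by (rule that[OF yz]) (use level_socle_in_ideal[OF assms(1-4)] X in blast)
qed

section \<open>Vanishing of \<open>R/(I + (L))\<close> in a degree\<close>

definition plus_principal :: "'a::field poly3 set \<Rightarrow> 'a poly3 \<Rightarrow> 'a poly3 set" where
  "plus_principal I L = {i + L * r |i r. i \<in> I}"

lemma quot_vanishes_iff: "quot_vanishes I L j \<longleftrightarrow> homog j \<subseteq> plus_principal I L"
  by (simp add: quot_vanishes_def plus_principal_def)

lemma is_ideal_plus_principal:
  assumes I: "is_ideal I"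
  shows "is_ideal (plus_principal I L)"
  unfolding is_ideal_def plus_principal_def
proof (intro conjI ballI allI)
  show "0 \<in> {i + L * r |i r. i \<in> I}" using ideal_zero[OF I] by force
next
  fix p q assume "p \<in> {i + L * r |i r. i \<in> I}" "q \<in> {i + L * r |i r. i \<in> I}"
  then obtain i r i' r' where "p = i + L * r" "q = i' + L * r'" "i \<in> I" "i' \<in> I" by blast
  moreover then have "p + q = (i + i') + L * (r + r')" by (simp add: algebra_simps)
  ultimately show "p + q \<in> {i + L * r |i r. i \<in> I}" using ideal_add[OF I] by blast
next
  fix q p assume "p \<in> {i + L * r |i r. i \<in> I}"
  then obtain i r where "p = i + L * r" "i \<in> I" by blast
  moreover then have "q * p = q * i + L * (q * r)" by (simp add: algebra_simps)
  ultimately show "q * p \<in> {i + L * r |i r. i \<in> I}" using ideal_mult[OF I] by blast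
qed

lemma monomial_Suc_eq_mult_X:
  assumes "mdeg m = Suc j"
  obtains x m' where "x \<in> {X1, X2, X3}" "mdeg m' = j"
    "Poly_Mapping.single m (1::'a::field) = x * Poly_Mapping.single m' 1"
proof -
  obtain m1 m2 m3 where m: "m = (m1, m2, m3)" by (cases m)
  consider "m1 > 0" | "m1 = 0" "m2 > 0" | "m1 = 0" "m2 = 0" "m3 > 0" using assms m by (auto simp: mdeg_def)
  then show ?thesis
  proof cases
    case 1
    then show ?thesis
      using that[of X1 "(m1 - 1, m2, m3)"] assms m by (simp add: X1_def mult_single mdeg_def)
  next
    case 2
    then show ?thesis
      using that[of X2 "(m1, m2 - 1, m3)"] assms m by (simp add: X2_def mult_single mdeg_def)
  next
    case 3
    then show ?thesis
      using that[of X3 "(m1, m2, m3 - 1)"] assms m by (simp add: X3_def mult_single mdeg_def)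
  qed
qed

lemma quot_vanishes_Suc:
  fixes I :: "'a::field poly3 set"
  assumes I: "is_ideal I" and "quot_vanishes I L j"
  shows "quot_vanishes I L (Suc j)"
proof -
  have J: "is_ideal (plus_principal I L)" by (rule is_ideal_plus_principal[OF I])
  have "Poly_Mapping.single m 1 \<in> plus_principal I L" if m: "mdeg m = Suc j" for m
  proof -
    obtain x :: "'a poly3" and m' where m': "mdeg m' = j" and "Poly_Mapping.single m 1 = x * Poly_Mapping.single m' 1"
      using monomial_Suc_eq_mult_X[OF m] by blast
    moreover have "\<forall>m. mdeg m = j \<longrightarrow> Poly_Mapping.single m 1 \<in> plus_principal I L"
      using assms(2) homog_subset_ideal_iff[OF J] by (simp only: quot_vanishes_iff)
    then have "Poly_Mapping.single m' 1 \<in> plus_principal I L" using m' by blast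
    ultimately show ?thesis using ideal_mult[OF J] by metis
  qed
  then show ?thesis using homog_subset_ideal_iff[OF J] by (simp add: quot_vanishes_iff)
qed

lemma quot_vanishes_mono:
  assumes "is_ideal I" "quot_vanishes I L j" "j \<le> k"
  shows "quot_vanishes I L k"
  using assms(3) by (induction k rule: dec_induct) (auto intro: assms(2) quot_vanishes_Suc[OF assms(1)])

lemma quot_vanishes_zero_iff: "is_ideal I \<Longrightarrow> quot_vanishes I 0 j \<longleftrightarrow> homog j \<subseteq> I"
  by (force simp: quot_vanishes_def)

lemma homog_Suc_subset_mult_plus_ideal:
  assumes hI: "homogeneous_ideal I" and L: "L \<in> homog 1" and qv: "quot_vanishes I L (Suc j)"
  shows "homog (Suc j) \<subseteq> {u + i |u i. u \<in> (\<lambda>p. L * p) ` homog j \<and> i \<in> I}"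
proof
  fix p :: "'a poly3" assume p: "p \<in> homog (Suc j)"
  then obtain i r where ir: "p = i + L * r" "i \<in> I" using qv by (auto simp: quot_vanishes_def)
  have "p = hcomp (Suc j) p" using hcomp_homog_self[OF p] by simp
  also have "\<dots> = hcomp (Suc j) i + hcomp (1 + j) (L * r)" using ir by (simp add: hcomp_add)
  also have "\<dots> = L * hcomp j r + hcomp (Suc j) i" using hcomp_mult_homog[OF L] by simp
  finally show "p \<in> {u + i |u i. u \<in> (\<lambda>p. L * p) ` homog j \<and> i \<in> I}"
    using hI ir(2) hcomp_in_homog by (force simp: homogeneous_ideal_def)
qed

section \<open>Multiplication by linear forms in \<open>A = R/I\<close>\<close>

definition colon :: "'a::field poly3 set \<Rightarrow> 'a poly3 \<Rightarrow> nat \<Rightarrow> 'a poly3 set" where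
  "colon I L j = {a \<in> homog j. L * a \<in> I}"

text \<open>\<open>colon_dim I L j\<close> is \<open>dim\<^sub>k (0 :\<^sub>A L)\<^sub>j\<close>, as \<open>(0 :\<^sub>A L)\<^sub>j = colon I L j / I\<^sub>j\<close>.\<close>

definition colon_dim :: "'a::field poly3 set \<Rightarrow> 'a poly3 \<Rightarrow> nat \<Rightarrow> int" where
  "colon_dim I L j = int (vs.dim (colon I L j)) - int (vs.dim (homog j \<inter> I))"

lemma subspace_colon: "is_ideal I \<Longrightarrow> vs.subspace (colon I L j)"
  unfolding colon_def by (rule subspace_mult_preimage[OF _ subspace_homog])

lemma colon_subset_homog: "colon I L j \<subseteq> homog j"
  by (auto simp: colon_def)

lemma colon_Int_ideal: "is_ideal I \<Longrightarrow> colon I L j \<inter> I = homog j \<inter> I"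
  by (auto simp: colon_def intro: ideal_mult)

lemma mult_mem_colon_Suc:
  assumes "is_ideal I" "a \<in> colon I L j" "q \<in> homog 1"
  shows "q * a \<in> colon I L (Suc j)"
proof -
  have "q * a \<in> homog (Suc j)" using homog_mult[OF assms(3)] assms(2) by (auto simp: colon_def)
  moreover have "L * (q * a) \<in> I"
    using ideal_mult[OF assms(1), of "L * a" q] assms(2) by (auto simp: colon_def mult.left_commute)
  ultimately show ?thesis by (simp add: colon_def)
qed

lemma dim_mult_image_Int_le:
  fixes I :: "'a::field poly3 set"
  assumes I: "is_ideal I" and q: "q \<noteq> 0"
    and V: "vs.subspace V" and W: "vs.subspace W" "W \<subseteq> homog N" and VW: "(\<lambda>p. q * p) ` V \<subseteq> W"
  shows "vs.dim V + vs.dim (W \<inter> I) \<le> vs.dim W + vs.dim {a \<in> V. q * a \<in> I}"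
proof -
  have "(\<lambda>p. q * p) ` V \<inter> I = (\<lambda>p. q * p) ` {a \<in> V. q * a \<in> I}" by auto
  then have "vs.dim ((\<lambda>p. q * p) ` V \<inter> I) = vs.dim {a \<in> V. q * a \<in> I}"
    by (simp add: dim_mult_image[OF q])
  then show ?thesis
    using vs.dim_add_dim_Int_le[OF finite_monomials _ VW subspace_mult_image[OF V] W(1) subspace_ideal[OF I]]
      W(2) homog_subset_span_monomials dim_mult_image[OF q] by fastforce
qed

lemma dim_mult_image_Int_eq:
  fixes I :: "'a::field poly3 set"
  assumes I: "is_ideal I" and q: "q \<noteq> 0"
    and V: "vs.subspace V" and W: "vs.subspace W" "W \<subseteq> homog N" and VW: "(\<lambda>p. q * p) ` V \<subseteq> W"
    and W_sums: "W \<subseteq> {u + i |u i. u \<in> (\<lambda>p. q * p) ` V \<and> i \<in> I}"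
  shows "vs.dim V + vs.dim (W \<inter> I) = vs.dim W + vs.dim {a \<in> V. q * a \<in> I}"
proof -
  have "(\<lambda>p. q * p) ` V \<inter> I = (\<lambda>p. q * p) ` {a \<in> V. q * a \<in> I}" by auto
  then have "vs.dim ((\<lambda>p. q * p) ` V \<inter> I) = vs.dim {a \<in> V. q * a \<in> I}"
    by (simp add: dim_mult_image[OF q])
  then show ?thesis
    using vs.dim_add_dim_Int_eq[OF finite_monomials _ VW subspace_mult_image[OF V] W(1) subspace_ideal[OF I] W_sums]
      W(2) homog_subset_span_monomials dim_mult_image[OF q] by fastforce
qed

lemma hfun_le_hfun_Suc_add_colon_dim:
  fixes I :: "'a::field poly3 set"
  assumes I: "is_ideal I" and L: "L \<in> homog 1" "L \<noteq> 0"
  shows "int (hfun I j) \<le> int (hfun I (Suc j)) + colon_dim I L j"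
proof -
  have "vs.dim (homog j :: 'a poly3 set) + vs.dim (homog (Suc j) \<inter> I) \<le> vs.dim (homog (Suc j) :: 'a poly3 set) + vs.dim (colon I L j)"
    using dim_mult_image_Int_le[OF I L(2) subspace_homog subspace_homog order_refl] homog_mult[OF L(1)]
    unfolding colon_def by fastforce
  then show ?thesis using hfun_eq_dim_diff[of I j] hfun_eq_dim_diff[of I "Suc j"] unfolding colon_dim_def by linarith
qed

lemma hfun_eq_hfun_Suc_add_colon_dim:
  fixes I :: "'a::field poly3 set"
  assumes hI: "homogeneous_ideal I" and L: "L \<in> homog 1" "L \<noteq> 0" and qv: "quot_vanishes I L (Suc j)"
  shows "int (hfun I j) = int (hfun I (Suc j)) + colon_dim I L j"
proof -
  have I: "is_ideal I" using hI by (simp add: homogeneous_ideal_def)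
  have "vs.dim (homog j :: 'a poly3 set) + vs.dim (homog (Suc j) \<inter> I) = vs.dim (homog (Suc j) :: 'a poly3 set) + vs.dim (colon I L j)"
    using dim_mult_image_Int_eq[OF I L(2) subspace_homog subspace_homog order_refl _
        homog_Suc_subset_mult_plus_ideal[OF hI L(1) qv]] homog_mult[OF L(1)]
    unfolding colon_def by fastforce
  then show ?thesis using hfun_eq_dim_diff[of I j] hfun_eq_dim_diff[of I "Suc j"] unfolding colon_dim_def by linarith
qed

text \<open>The kernel of \<open>y\<close> on \<open>(0 :\<^sub>A L)\<^sub>j\<close> is \<open>(0 :\<^sub>A (L, y))\<^sub>j\<close>, on which \<open>z\<close> is injective because
  \<open>(0 :\<^sub>A (L, y, z))\<^sub>j = 0\<close>; so \<open>k\<^sub>j \<le> k\<^sub>j\<^sub>+\<^sub>1 + dim (0 :\<^sub>A (L, y))\<^sub>j\<^sub>+\<^sub>1\<close>, and the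
  hypothesis \<open>2 k\<^sub>j\<^sub>+\<^sub>1 \<le> k\<^sub>j\<close> forces \<open>(0 :\<^sub>A (L, y))\<^sub>j\<^sub>+\<^sub>1 = (0 :\<^sub>A L)\<^sub>j\<^sub>+\<^sub>1\<close>.\<close>

lemma mult_colon_Suc_in_ideal:
  fixes I :: "'a::field poly3 set" and L y z :: "'a poly3"
  assumes I: "is_ideal I" and y: "y \<in> homog 1" "y \<noteq> 0" and z: "z \<in> homog 1" "z \<noteq> 0"
    and socle: "\<And>a. a \<in> homog j \<Longrightarrow> L * a \<in> I \<Longrightarrow> y * a \<in> I \<Longrightarrow> z * a \<in> I \<Longrightarrow> a \<in> I"
    and ineq: "2 * colon_dim I L (Suc j) \<le> colon_dim I L j"
    and b: "b \<in> colon I L (Suc j)"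
  shows "y * b \<in> I"
proof -
  let ?K0 = "colon I L j" and ?K1 = "colon I L (Suc j)"
  define P where "P = {a \<in> ?K0. y * a \<in> I}"
  define S where "S = {b \<in> ?K1. y * b \<in> I}"
  have sK0: "vs.subspace ?K0" and sK1: "vs.subspace ?K1" using subspace_colon[OF I] by auto
  have sP: "vs.subspace P" and sS: "vs.subspace S"
    unfolding P_def S_def by (rule subspace_mult_preimage[OF I sK0], rule subspace_mult_preimage[OF I sK1])
  have "vs.dim ?K0 + vs.dim (?K1 \<inter> I) \<le> vs.dim ?K1 + vs.dim P"
    unfolding P_def using mult_mem_colon_Suc[OF I _ y(1)]
    by (intro dim_mult_image_Int_le[OF I y(2) sK0 sK1 colon_subset_homog]) auto
  moreover have "vs.dim P + vs.dim (S \<inter> I) \<le> vs.dim S + vs.dim {a \<in> P. z * a \<in> I}"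
  proof (rule dim_mult_image_Int_le[OF I z(2) sP sS])
    show "S \<subseteq> homog (Suc j)" using colon_subset_homog unfolding S_def by blast
    show "(\<lambda>p. z * p) ` P \<subseteq> S"
      using mult_mem_colon_Suc[OF I _ z(1)] ideal_mult[OF I, of "y * _" z]
      unfolding P_def S_def by (auto simp: mult.left_commute)
  qed
  moreover have "{a \<in> P. z * a \<in> I} = homog j \<inter> I"
    using socle ideal_mult[OF I] unfolding P_def colon_def by auto
  moreover have "S \<inter> I = homog (Suc j) \<inter> I" "?K1 \<inter> I = homog (Suc j) \<inter> I"
    using colon_Int_ideal[OF I, of L "Suc j"] ideal_mult[OF I] unfolding S_def by auto
  ultimately have count: "vs.dim ?K0 + 2 * vs.dim (homog (Suc j) \<inter> I) \<le> vs.dim ?K1 + vs.dim S + vs.dim (homog j \<inter> I)"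
    by simp
  have "2 * int (vs.dim ?K1) - 2 * int (vs.dim (homog (Suc j) \<inter> I)) \<le> int (vs.dim ?K0) - int (vs.dim (homog j \<inter> I))"
    using ineq unfolding colon_dim_def by (simp only: right_diff_distrib)
  with count have "vs.dim ?K1 \<le> vs.dim S" by linarith
  moreover have "S \<subseteq> ?K1" unfolding S_def by blast
  moreover have "?K1 \<subseteq> vs.span (monomials (Suc j))"
    using colon_subset_homog homog_subset_span_monomials by blast
  ultimately have "S = ?K1" using vs.subspace_eq_if_dim_le[OF finite_monomials _ _ sS] by blast
  then show ?thesis using b unfolding S_def by blast
qed

lemma colon_dim_Suc_eq_0:
  fixes I :: "'a::field poly3 set" and L y z :: "'a poly3"
  assumes I: "is_ideal I" and y: "y \<in> homog 1" "y \<noteq> 0" and z: "z \<in> homog 1" "z \<noteq> 0"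
    and socle: "\<And>a i. a \<in> homog i \<Longrightarrow> i \<in> {j, Suc j} \<Longrightarrow> L * a \<in> I \<Longrightarrow> y * a \<in> I \<Longrightarrow> z * a \<in> I \<Longrightarrow> a \<in> I"
    and ineq: "2 * colon_dim I L (Suc j) \<le> colon_dim I L j"
  shows "colon_dim I L (Suc j) = 0"
proof -
  have "colon I L (Suc j) \<subseteq> I"
  proof
    fix b assume b: "b \<in> colon I L (Suc j)"
    have "y * b \<in> I" by (rule mult_colon_Suc_in_ideal[OF I y z _ ineq b]) (use socle in blast)
    moreover have "z * b \<in> I" by (rule mult_colon_Suc_in_ideal[OF I z y _ ineq b]) (use socle in blast)
    ultimately show "b \<in> I" using socle[of b "Suc j"] b unfolding colon_def by blast
  qed
  then have "colon I L (Suc j) = homog (Suc j) \<inter> I"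
    using colon_Int_ideal[OF I, of L "Suc j"] by blast
  then show ?thesis by (simp add: colon_dim_def)
qed

section \<open>General linear forms\<close>

definition mono_eval :: "mono3 \<Rightarrow> 'a::field \<times> 'a \<times> 'a \<Rightarrow> 'a" where
  "mono_eval m c = fst c ^ fst m * fst (snd c) ^ fst (snd m) * snd (snd c) ^ snd (snd m)"

lemma mono_eval_add: "mono_eval (a + b) c = mono_eval a c * mono_eval b c"
  by (cases a; cases b) (simp add: mono_eval_def power_add algebra_simps)

lemma mono_eval_zero: "mono_eval 0 c = 1"
  by (simp add: mono_eval_def zero_prod_def)

lemma peval_eq_sum: "peval F c = (\<Sum>m\<in>Poly_Mapping.keys F. Poly_Mapping.lookup F m * mono_eval m c)"
  unfolding peval_def mono_eval_def by (simp add: mult.assoc)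

lemma peval_eq_sum_superset:
  assumes "finite S" "Poly_Mapping.keys F \<subseteq> S"
  shows "peval F c = (\<Sum>m\<in>S. Poly_Mapping.lookup F m * mono_eval m c)"
  unfolding peval_eq_sum by (rule sum.mono_neutral_left) (use assms in \<open>auto simp: in_keys_iff\<close>)

lemma peval_zero [simp]: "peval 0 c = 0"
  by (simp add: peval_def)

lemma peval_add: "peval (p + q) c = peval p c + peval q c"
proof -
  let ?S = "Poly_Mapping.keys p \<union> Poly_Mapping.keys q"
  have "peval (p + q) c = (\<Sum>m\<in>?S. Poly_Mapping.lookup (p + q) m * mono_eval m c)"
    by (rule peval_eq_sum_superset) (auto simp: keys_add[of p q, THEN subset_trans])
  also have "\<dots> = (\<Sum>m\<in>?S. Poly_Mapping.lookup p m * mono_eval m c) + (\<Sum>m\<in>?S. Poly_Mapping.lookup q m * mono_eval m c)"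
    by (simp add: lookup_add distrib_right sum.distrib)
  also have "\<dots> = peval p c + peval q c"
    by (simp add: peval_eq_sum_superset[symmetric])
  finally show ?thesis .
qed

lemma peval_sum: "peval (sum f S) c = (\<Sum>x\<in>S. peval (f x) c)"
  by (induction S rule: infinite_finite_induct) (auto simp: peval_add)

lemma peval_single: "peval (Poly_Mapping.single m a) c = a * mono_eval m c"
  using peval_eq_sum_superset[of "{m}" "Poly_Mapping.single m a" c] by simp

lemma peval_mult: "peval (p * q) c = peval p c * peval q c"
proof -
  have pq: "p * q = (\<Sum>a\<in>Poly_Mapping.keys p. \<Sum>b\<in>Poly_Mapping.keys q.
      Poly_Mapping.single (a + b) (Poly_Mapping.lookup p a * Poly_Mapping.lookup q b))"
    by (subst sum_single_lookup[of p, symmetric], subst sum_single_lookup[of q, symmetric])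
       (simp add: sum_distrib_left sum_distrib_right mult_single, rule sum.swap)
  show ?thesis
    unfolding pq peval_sum peval_single mono_eval_add
    by (simp add: peval_eq_sum sum_distrib_left sum_distrib_right algebra_simps) (subst sum.swap, simp add: algebra_simps)
qed

lemma peval_one: "peval 1 c = 1"
  using peval_single[of 0 1 c] by (simp add: mono_eval_zero)

lemma comm_ring_hom_peval: "comm_ring_hom (\<lambda>F. peval F (c :: 'a::field \<times> 'a \<times> 'a))"
  by unfold_locales (simp_all add: peval_add peval_mult peval_one)

lemma inj_on_base_expansion:
  fixes B :: nat
  shows "inj_on (\<lambda>m. fst m + B * fst (snd m) + B * B * snd (snd m)) {m. fst m < B \<and> fst (snd m) < B \<and> snd (snd m) < B}"
proof (rule inj_onI)
  fix m m' assume mm: "m \<in> {m. fst m < B \<and> fst (snd m) < B \<and> snd (snd m) < B}"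
    "m' \<in> {m. fst m < B \<and> fst (snd m) < B \<and> snd (snd m) < B}"
    "fst m + B * fst (snd m) + B * B * snd (snd m) = fst m' + B * fst (snd m') + B * B * snd (snd m')"
  obtain a1 a2 a3 where m: "m = (a1, a2, a3)" by (cases m)
  obtain b1 b2 b3 where m': "m' = (b1, b2, b3)" by (cases m')
  have lt: "a1 < B" "a2 < B" "a3 < B" "b1 < B" "b2 < B" "b3 < B" using mm(1,2) m m' by auto
  have E: "a1 + B * (a2 + B * a3) = b1 + B * (b2 + B * b3)" using mm(3) m m' by (simp add: algebra_simps)
  have "a1 = b1" using arg_cong[OF E, of "\<lambda>x. x mod B"] lt by simp
  moreover have E': "a2 + B * a3 = b2 + B * b3" using arg_cong[OF E, of "\<lambda>x. x div B"] lt by simp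
  moreover have "a2 = b2" using arg_cong[OF E', of "\<lambda>x. x mod B"] lt by simp
  moreover have "a3 = b3" using arg_cong[OF E', of "\<lambda>x. x div B"] lt by simp
  ultimately show "m = m'" using m m' by simp
qed

text \<open>Kronecker substitution \<open>(x\<^sub>1, x\<^sub>2, x\<^sub>3) \<mapsto> (t, t^B, t^(B*B))\<close>, with \<open>B\<close> exceeding all exponents,
  turns a nonzero polynomial into a nonzero univariate one, which has a non-root in the infinite
  field.\<close>

lemma ex_peval_neq_zero:
  fixes F :: "'a::field_char_0 poly3"
  assumes "F \<noteq> 0"
  shows "\<exists>c. peval F c \<noteq> 0"
proof -
  define B where "B = Suc (Max (insert 0 (mdeg ` Poly_Mapping.keys F)))"
  have bnd: "fst m < B \<and> fst (snd m) < B \<and> snd (snd m) < B" if "m \<in> Poly_Mapping.keys F" for m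
  proof -
    have "mdeg m \<le> Max (insert 0 (mdeg ` Poly_Mapping.keys F))" using that by (intro Max_ge) auto
    then show ?thesis unfolding B_def mdeg_def by auto
  qed
  define e where "e m = fst m + B * fst (snd m) + B * B * snd (snd m)" for m :: mono3
  have inj: "inj_on e (Poly_Mapping.keys F)"
    unfolding e_def by (rule inj_on_subset[OF inj_on_base_expansion]) (use bnd in blast)
  define P where "P = (\<Sum>m\<in>Poly_Mapping.keys F. Polynomial.monom (Poly_Mapping.lookup F m) (e m))"
  have Pev: "poly P t = peval F (t, t ^ B, t ^ (B * B))" for t
    unfolding P_def peval_eq_sum poly_sum poly_monom mono_eval_def e_def
    by (intro sum.cong refl) (simp add: power_add power_mult algebra_simps)
  obtain m0 where m0: "m0 \<in> Poly_Mapping.keys F" using assms by (metis keys_eq_empty ex_in_conv)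
  have "coeff P (e m0) = (\<Sum>m\<in>Poly_Mapping.keys F. if e m = e m0 then Poly_Mapping.lookup F m else 0)"
    unfolding P_def coeff_sum coeff_monom by simp
  also have "\<dots> = (\<Sum>m\<in>Poly_Mapping.keys F. if m = m0 then Poly_Mapping.lookup F m else 0)"
    by (intro sum.cong refl) (use inj m0 in \<open>auto dest: inj_onD\<close>)
  also have "\<dots> \<noteq> 0" using m0 by (simp add: in_keys_iff)
  finally have "P \<noteq> 0" by auto
  then have "finite {t. poly P t = 0}" by (rule poly_roots_finite)
  then obtain t where "poly P t \<noteq> 0"
    using infinite_UNIV_char_0[where 'a = 'a] by (metis (mono_tags) UNIV_I ex_new_if_finite mem_Collect_eq)
  then show ?thesis using Pev by metis
qed

lemma general_common_point:
  fixes P :: "'a::field_char_0 \<times> 'a \<times> 'a \<Rightarrow> bool"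
  assumes "general P" "general Q"
  shows "\<exists>c. P c \<and> Q c"
proof -
  obtain F G where F: "F \<noteq> 0" "\<And>c. peval F c \<noteq> 0 \<Longrightarrow> P c"
    and G: "G \<noteq> 0" "\<And>c. peval G c \<noteq> 0 \<Longrightarrow> Q c"
    using assms unfolding general_def by blast
  have "F * G \<noteq> 0" using F G by simp
  then obtain c where "peval (F * G) c \<noteq> 0" using ex_peval_neq_zero by blast
  then have "peval F c \<noteq> 0" "peval G c \<noteq> 0" by (auto simp: peval_mult)
  then show ?thesis using F(2) G(2) by blast
qed

lemma det_neq_zero_solve_unit_vec:
  assumes A: "A \<in> carrier_mat n n" and "det A \<noteq> (0::'a::field)" and k0: "k0 < n"
  obtains x where "\<And>j. j < n \<Longrightarrow> (\<Sum>k<n. A $$ (j,k) * x k) = (if j = k0 then 1 else 0)"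
proof -
  have "A \<in> Units (ring_mat TYPE('a) n ())" by (rule det_non_zero_imp_unit[OF A assms(2)])
  then obtain B where B: "B \<in> carrier_mat n n" "A * B = 1\<^sub>m n"
    unfolding Units_def by (auto simp: ring_mat_simps)
  define v where "v = B *\<^sub>v unit_vec n k0"
  have v: "v \<in> carrier_vec n" unfolding v_def using B(1) by auto
  have Av: "A *\<^sub>v v = unit_vec n k0"
    unfolding v_def using assoc_mult_mat_vec[OF A B(1) unit_vec_carrier, symmetric] B(2) by simp
  have "(\<Sum>k<n. A $$ (j,k) * v $ k) = (if j = k0 then 1 else 0)" if j: "j < n" for j
  proof -
    have "(\<Sum>k<n. A $$ (j,k) * v $ k) = (A *\<^sub>v v) $ j"
      using v A j by (simp add: scalar_prod_def atLeast0LessThan)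
    then show ?thesis using Av j k0 by simp
  qed
  then show ?thesis by (rule that)
qed

definition coeff_matrix ::
    "mono3 list \<Rightarrow> (nat \<Rightarrow> 'a::field poly3) \<Rightarrow> (nat \<Rightarrow> 'a poly3) \<Rightarrow> 'a \<times> 'a \<times> 'a \<Rightarrow> 'a mat" where
  "coeff_matrix ms r i c =
     mat (length ms) (length ms) (\<lambda>(j, k). Poly_Mapping.lookup (linform c * r k + i k) (ms ! j))"

lemma det_coeff_matrix_polynomial: "\<exists>F. \<forall>c. peval F c = det (coeff_matrix ms r i c)"
proof -
  define E :: "nat \<Rightarrow> nat \<Rightarrow> 'a poly3" where
    "E j k = Poly_Mapping.single (1,0,0) (Poly_Mapping.lookup (X1 * r k) (ms ! j))
      + Poly_Mapping.single (0,1,0) (Poly_Mapping.lookup (X2 * r k) (ms ! j))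
      + Poly_Mapping.single (0,0,1) (Poly_Mapping.lookup (X3 * r k) (ms ! j))
      + Poly_Mapping.single 0 (Poly_Mapping.lookup (i k) (ms ! j))" for j k
  have "peval (E j k) c = Poly_Mapping.lookup (linform c * r k + i k) (ms ! j)" for j k c
    unfolding E_def linform_mult
    by (simp add: peval_add peval_single mono_eval_def lookup_add lookup_sc algebra_simps zero_prod_def)
  then have M: "map_mat (\<lambda>e. peval e c) (mat (length ms) (length ms) (\<lambda>(j, k). E j k)) = coeff_matrix ms r i c" for c
    unfolding coeff_matrix_def by (intro eq_matI) auto
  have "peval (det (mat (length ms) (length ms) (\<lambda>(j, k). E j k))) c = det (coeff_matrix ms r i c)" for c
    by (subst M[symmetric]) (rule comm_ring_hom.hom_det[OF comm_ring_hom_peval, symmetric])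
  then show ?thesis by blast
qed

lemma hcomp_eq_single_if_lookup_nth:
  assumes ms: "distinct ms" "set ms = {m. mdeg m = N}" and k0: "k0 < length ms"
    and lw: "\<And>j. j < length ms \<Longrightarrow> Poly_Mapping.lookup w (ms ! j) = (if j = k0 then 1 else 0)"
  shows "hcomp N w = Poly_Mapping.single (ms ! k0) 1"
proof (rule poly_mapping_eqI)
  fix mo
  show "Poly_Mapping.lookup (hcomp N w) mo = Poly_Mapping.lookup (Poly_Mapping.single (ms ! k0) 1) mo"
  proof (cases "mdeg mo = N")
    case True
    then have "mo \<in> set ms" using ms(2) by simp
    then obtain j where j: "j < length ms" "mo = ms ! j" by (auto simp: in_set_conv_nth)
    then show ?thesis using lw[OF j(1)] ms(1) k0 True
      by (auto simp: lookup_hcomp lookup_single when_def nth_eq_iff_index_eq)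
  next
    case False
    moreover have "mdeg (ms ! k0) = N" using ms(2) k0 nth_mem by blast
    ultimately show ?thesis by (auto simp: lookup_hcomp lookup_single when_def)
  qed
qed

lemma quot_vanishes_if_det_coeff_matrix_neq_0:
  fixes I :: "'a::field poly3 set"
  assumes hI: "homogeneous_ideal I" and ms: "distinct ms" "set ms = {m. mdeg m = Suc N}"
    and i: "\<And>k. k < length ms \<Longrightarrow> i k \<in> I" and det: "det (coeff_matrix ms r i c) \<noteq> 0"
  shows "quot_vanishes I (linform c) (Suc N)"
proof -
  have I: "is_ideal I" using hI by (simp add: homogeneous_ideal_def)
  let ?n = "length ms" and ?L = "linform c"
  have "Poly_Mapping.single (ms ! k0) 1 \<in> plus_principal I ?L" if k0: "k0 < ?n" for k0
  proof -
    have "coeff_matrix ms r i c \<in> carrier_mat ?n ?n" by (simp add: coeff_matrix_def)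
    then obtain x where x: "\<And>j. j < ?n \<Longrightarrow>
        (\<Sum>k<?n. coeff_matrix ms r i c $$ (j,k) * x k) = (if j = k0 then 1 else 0)"
      using det_neq_zero_solve_unit_vec[OF _ det k0] by blast
    define R where "R = (\<Sum>k<?n. sc (x k) (r k))"
    define Ii where "Ii = (\<Sum>k<?n. sc (x k) (i k))"
    define w where "w = (\<Sum>k<?n. sc (x k) (?L * r k + i k))"
    have w_split: "w = ?L * R + Ii"
      unfolding w_def R_def Ii_def by (simp add: sum_distrib_left sum.distrib sc_def algebra_simps)
    have lw: "Poly_Mapping.lookup w (ms ! j) = (if j = k0 then 1 else 0)" if j: "j < ?n" for j
    proof -
      have "Poly_Mapping.lookup w (ms ! j) = (\<Sum>k<?n. x k * Poly_Mapping.lookup (?L * r k + i k) (ms ! j))"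
        unfolding w_def by (simp add: lookup_sum lookup_sc)
      also have "\<dots> = (\<Sum>k<?n. coeff_matrix ms r i c $$ (j,k) * x k)"
        using j by (intro sum.cong) (simp_all add: coeff_matrix_def)
      finally show ?thesis using x[OF j] by simp
    qed
    have "Poly_Mapping.single (ms ! k0) 1 = hcomp (Suc N) w"
      using hcomp_eq_single_if_lookup_nth[OF ms k0 lw] by simp
    also have "\<dots> = hcomp (Suc N) Ii + ?L * hcomp N R"
      using hcomp_mult_homog[OF linform_in_homog] by (simp add: w_split hcomp_add)
    finally have eq: "Poly_Mapping.single (ms ! k0) 1 = hcomp (Suc N) Ii + ?L * hcomp N R" .
    have "Ii \<in> I" unfolding Ii_def using i by (auto intro!: ideal_sum[OF I] ideal_sc[OF I])
    then have "hcomp (Suc N) Ii \<in> I" using hI by (simp add: homogeneous_ideal_def)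
    then show ?thesis unfolding eq plus_principal_def by blast
  qed
  moreover have "\<exists>k0 < ?n. m = ms ! k0" if "mdeg m = Suc N" for m
  proof -
    have "m \<in> set ms" using that ms(2) by simp
    then show ?thesis by (auto simp: in_set_conv_nth)
  qed
  ultimately have "\<forall>m. mdeg m = Suc N \<longrightarrow> Poly_Mapping.single m 1 \<in> plus_principal I ?L" by blast
  then show ?thesis
    using homog_subset_ideal_iff[OF is_ideal_plus_principal[OF I]] by (simp add: quot_vanishes_iff)
qed

lemma quot_vanishes_general:
  fixes I :: "'a::field poly3 set"
  assumes hI: "homogeneous_ideal I" and qv0: "quot_vanishes I (linform c0) (Suc N)"
  shows "\<exists>F. F \<noteq> 0 \<and> (\<forall>c. peval F c \<noteq> 0 \<longrightarrow> quot_vanishes I (linform c) (Suc N))"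
proof -
  obtain ms where ms: "distinct ms" "set ms = {m. mdeg m = Suc N}"
    using finite_distinct_list[OF finite_mdeg_eq] by blast
  have "\<exists>ri. snd ri \<in> I \<and> Poly_Mapping.single (ms ! k) 1 = linform c0 * fst ri + snd ri"
    if "k < length ms" for k
  proof -
    have "Poly_Mapping.single (ms ! k) (1::'a) \<in> homog (Suc N)"
      using that ms(2) nth_mem single_in_homog by blast
    then obtain i r where "Poly_Mapping.single (ms ! k) 1 = i + linform c0 * r" "i \<in> I"
      using qv0 unfolding quot_vanishes_def by blast
    then show ?thesis by (intro exI[of _ "(r, i)"]) (simp add: add.commute)
  qed
  then obtain f where f: "\<And>k. k < length ms \<Longrightarrow>
      snd (f k) \<in> I \<and> Poly_Mapping.single (ms ! k) 1 = linform c0 * fst (f k) + snd (f k)"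
    by metis
  obtain F where F: "\<And>c. peval F c = det (coeff_matrix ms (fst \<circ> f) (snd \<circ> f) c)"
    using det_coeff_matrix_polynomial by metis
  have "coeff_matrix ms (fst \<circ> f) (snd \<circ> f) c0 = 1\<^sub>m (length ms)"
  proof (rule eq_matI)
    fix j k assume "j < dim_row (1\<^sub>m (length ms) :: 'a mat)" "k < dim_col (1\<^sub>m (length ms) :: 'a mat)"
    then have jk: "j < length ms" "k < length ms" by auto
    have "coeff_matrix ms (fst \<circ> f) (snd \<circ> f) c0 $$ (j, k) = Poly_Mapping.lookup (Poly_Mapping.single (ms ! k) 1) (ms ! j)"
      using f[OF jk(2)] jk by (simp add: coeff_matrix_def)
    also have "\<dots> = 1\<^sub>m (length ms) $$ (j, k)"
      using ms(1) jk by (auto simp: lookup_single when_def nth_eq_iff_index_eq)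
    finally show "coeff_matrix ms (fst \<circ> f) (snd \<circ> f) c0 $$ (j, k) = 1\<^sub>m (length ms) $$ (j, k)" .
  qed (simp_all add: coeff_matrix_def)
  then have "F \<noteq> 0" using F[of c0] by auto
  moreover have "quot_vanishes I (linform c) (Suc N)" if "peval F c \<noteq> 0" for c
  proof (rule quot_vanishes_if_det_coeff_matrix_neq_0[OF hI ms])
    show "(snd \<circ> f) k \<in> I" if "k < length ms" for k using f[OF that] by simp
    show "det (coeff_matrix ms (fst \<circ> f) (snd \<circ> f) c) \<noteq> 0" using that F by simp
  qed
  ultimately show ?thesis by blast
qed

lemma quot_vanishes_rL:
  fixes I :: "'a::field poly3 set"
  assumes I: "is_ideal I" and art: "artinian I"
  shows "quot_vanishes I (linform c) (Suc (rL I c))"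
proof -
  obtain N where "homog N \<subseteq> I" using art unfolding artinian_def by blast
  then have "quot_vanishes I (linform c) (Suc N)"
    using quot_vanishes_Suc[OF I] by (force simp: quot_vanishes_def)
  then show ?thesis unfolding rL_def by (rule LeastI)
qed

lemma r1_attained:
  fixes I :: "'a::field_char_0 poly3 set"
  assumes hI: "homogeneous_ideal I" and art: "artinian I"
  obtains c where "rL I c = r1 I"
proof -
  have I: "is_ideal I" using hI by (simp add: homogeneous_ideal_def)
  define m where "m = (LEAST v. \<exists>c. rL I c = v)"
  obtain c0 where c0: "rL I c0 = m" using LeastI_ex[of "\<lambda>v. \<exists>c. rL I c = v"] unfolding m_def by blast
  have m_le: "m \<le> rL I c" for c unfolding m_def by (rule Least_le) blast
  obtain F where F: "F \<noteq> 0" "\<And>c. peval F c \<noteq> 0 \<Longrightarrow> quot_vanishes I (linform c) (Suc m)"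
    using quot_vanishes_general[OF hI quot_vanishes_rL[OF I art, of c0]] c0 by auto
  have "rL I c = m" if "peval F c \<noteq> 0" for c
    using Least_le[of "\<lambda>l. quot_vanishes I (linform c) (Suc l)", OF F(2)[OF that]] m_le[of c]
    unfolding rL_def by simp
  then have gen: "general (\<lambda>c. rL I c = m)" unfolding general_def using F(1) by blast
  have "r = m" if "general (\<lambda>c. rL I c = r)" for r
    using general_common_point[OF that gen] by auto
  then have "r1 I = m" unfolding r1_def using gen by (rule the_equality[rotated])
  then show ?thesis using that c0 by simp
qed

theorem corollary3p20:
  fixes I :: "'a::field_char_0 poly3 set" and s :: nat
  assumes "homogeneous_ideal I"
    and "artinian I"
    and "hfun I 0 = 1" and "hfun I 1 = 3"
    and "hfun I s \<noteq> 0" and "\<forall>j>s. hfun I j = 0"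
    and "\<exists>d. r1 I < d \<and> d < s \<and>
           int (hfun I (d - 1)) - int (hfun I d) = 2 * (int (hfun I d) - int (hfun I (d + 1)))
           \<and> int (hfun I d) - int (hfun I (d + 1)) > 0"
  shows "\<not> level I"
proof
  assume lev: "level I"
  have I: "is_ideal I" using assms(1) by (simp add: homogeneous_ideal_def)
  obtain j where j: "r1 I < Suc j" "Suc j < s"
    "int (hfun I j) - int (hfun I (Suc j)) = 2 * (int (hfun I (Suc j)) - int (hfun I (Suc (Suc j))))"
    "int (hfun I (Suc j)) - int (hfun I (Suc (Suc j))) > 0"
    using assms(7) by (metis Suc_eq_plus1 Suc_pred' diff_Suc_1 gr0I not_less0)
  obtain c where c: "rL I c = r1 I" using r1_attained[OF assms(1,2)] .
  have qv: "quot_vanishes I (linform c) (Suc (Suc j))"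
    using quot_vanishes_mono[OF I quot_vanishes_rL[OF I assms(2)]] c j(1) by simp
  have "c \<noteq> 0"
  proof
    assume "c = 0"
    then have "quot_vanishes I 0 s" using quot_vanishes_mono[OF I qv] j(2) by (simp add: linform_zero)
    then show False using quot_vanishes_zero_iff[OF I] not_homog_subset_if_hfun_neq_0[OF assms(5)] by blast
  qed
  define L where "L = linform c"
  have L: "L \<in> homog 1" "L \<noteq> 0" unfolding L_def using linform_in_homog[of c] linform_neq_zero[OF \<open>c \<noteq> 0\<close>] by auto
  obtain y z where yz: "y \<in> homog 1" "y \<noteq> 0" "z \<in> homog 1" "z \<noteq> 0"
    and socle: "\<And>a i. a \<in> homog i \<Longrightarrow> i \<noteq> s \<Longrightarrow> L * a \<in> I \<Longrightarrow> y * a \<in> I \<Longrightarrow> z * a \<in> I \<Longrightarrow> a \<in> I"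
    using level_socle_linear_forms[OF I lev assms(5) _ \<open>c \<noteq> 0\<close>] assms(6) unfolding L_def by auto
  have "int (hfun I j) \<le> int (hfun I (Suc j)) + colon_dim I L j"
    by (rule hfun_le_hfun_Suc_add_colon_dim[OF I L])
  moreover have kd: "int (hfun I (Suc j)) = int (hfun I (Suc (Suc j))) + colon_dim I L (Suc j)"
    using hfun_eq_hfun_Suc_add_colon_dim[OF assms(1) L] qv unfolding L_def by blast
  ultimately have "2 * colon_dim I L (Suc j) \<le> colon_dim I L j"
    using j(3)[unfolded right_diff_distrib] by linarith
  then have "colon_dim I L (Suc j) = 0"
    by (rule colon_dim_Suc_eq_0[OF I yz, rotated]) (use socle j(2) in auto)
  then show False using kd j(4) by linarith
qed

end
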